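(* Let $X\subseteq\mathbb{R}^n$ be nonempty, closed, convex and bounded; let $F:X\to\mathbb{R}^n$ be $L_F$-Lipschitz continuous and monotone on $X$; let $H:X\to\mathbb{R}^n$ be $L_H$-Lipschitz continuous and monotone on $X$; and assume $\mathrm{SOL}(\mathrm{SOL}(X,F),H)\neq\emptyset$. Let $\gamma>0$ and let $\{\eta_k\}$ be a diminishing (nonincreasing) sequence of positive scalars with $\gamma^2(L_F^2+\eta_0^2L_H^2)\le0.5$. Let $x_0\in X$ and for $k\ge0$ set $y_{k+1}=\Pi_X[x_k-\gamma(F(x_k)+\eta_kH(x_k))]$, $x_{k+1}=\Pi_X[x_k-\gamma(F(y_{k+1})+\eta_kH(y_{k+1}))]$, and $\bar y_K=\frac1K\sum_{k=0}^{K-1}y_{k+1}$ for $K\ge1$. Then: (i) For all $K\ge1$, $-B_H\,\mathrm{dist}(\bar y_K,\mathrm{SOL}(X,F))\le\mathrm{Gap}(\bar y_K,\mathrm{SOL}(X,F),H)\le(\gamma\eta_{K-1}K)^{-1}D_X^2$. (ii) For all $K\ge1$, $0\le\mathrm{Gap}(\bar y_K,X,F)\le(\gamma K)^{-1}D_X^2+\sqrt2\,C_HD_XK^{-1}\sum_{k=0}^{K-1}\eta_k$. (iii) If $\lim_{k\to\infty}k\eta_{k-1}=\infty$ and $\lim_{k\to\infty}\frac1k\sum_{j=0}^{k-1}\eta_j=0$ (e.g., $\eta_k=(k+1)^{-b}$ with $0<b<1$), then every accumulation point of $\{\bar y_k\}$ belongs to $\mathrm{SOL}(\mathrm{SOL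}(X,F),H)$.
   Context: $\mathrm{SOL}(Y,G)=\{x\in Y: G(x)^\top(y-x)\ge0\ \forall y\in Y\}$. Dual gap: $\mathrm{Gap}(x,Y,G)=\sup_{y\in Y}G(y)^\top(x-y)$. $\Pi_X$ Euclidean projection; $\mathrm{dist}(x,Y)=\|x-\Pi_Y[x]\|$. $D_X^2=\sup_{x,y\in X}\frac12\|x-y\|^2$ ($D_X\ge0$), $B_H=\sup_{x\in\mathrm{SOL}(X,F)}\|H(x)\|$, $C_H=\sup_{x\in X}\|H(x)\|$. (The averaged iterate corresponds to the recursion $\bar y_{k+1}=(k\bar y_k+y_{k+1})/(k+1)$.) *)

theory Defs
  imports "HOL-Analysis.Analysis"
begin

definition SOL :: "'a::real_inner set \<Rightarrow> ('a \<Rightarrow> 'a) \<Rightarrow> 'a set" where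
  "SOL Y G = {x \<in> Y. \<forall>y\<in>Y. G x \<bullet> (y - x) \<ge> 0}"

definition Gap :: "'a::real_inner \<Rightarrow> 'a set \<Rightarrow> ('a \<Rightarrow> 'a) \<Rightarrow> real" where
  "Gap x Y G = (SUP y\<in>Y. G y \<bullet> (x - y))"

abbreviation proj :: "'a::euclidean_space set \<Rightarrow> 'a \<Rightarrow> 'a" where
  "proj Y x \<equiv> closest_point Y x"

definition pdist :: "'a::euclidean_space \<Rightarrow> 'a set \<Rightarrow> real" where
  "pdist x Y = norm (x - closest_point Y x)"

definition DX2 :: "'a::real_normed_vector set \<Rightarrow> real" where
  "DX2 X = (SUP p\<in>X \<times> X. (1/2) * (norm (fst p - snd p))\<^sup>2)"

definition DX :: "'a::real_normed_vector set \<Rightarrow> real" where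
  "DX X = sqrt (DX2 X)"

definition BH :: "'a::real_inner set \<Rightarrow> ('a \<Rightarrow> 'a) \<Rightarrow> ('a \<Rightarrow> 'a) \<Rightarrow> real" where
  "BH X F H = (SUP x\<in>SOL X F. norm (H x))"

definition CH :: "'a::real_normed_vector set \<Rightarrow> ('a \<Rightarrow> 'a) \<Rightarrow> real" where
  "CH X H = (SUP x\<in>X. norm (H x))"

definition monotone_op :: "'a::real_inner set \<Rightarrow> ('a \<Rightarrow> 'a) \<Rightarrow> bool" where
  "monotone_op X F \<longleftrightarrow> (\<forall>x\<in>X. \<forall>y\<in>X. (F x - F y) \<bullet> (x - y) \<ge> 0)"

end

theory Submission
  imports Defs
begin

text \<open>One extragradient step for \<open>F + \<eta> k H\<close>, tested against \<open>w \<in> X\<close>, gives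
  \<open>2\<gamma> (F y' + \<eta> k H y') \<bullet> (y' - w) \<le> |x k - w|\<^sup>2 - |x (k+1) - w|\<^sup>2\<close> with \<open>y' = y (k+1)\<close>.
  For \<open>w \<in> SOL X F\<close> monotonicity makes the \<open>F\<close>-term nonnegative, so \<open>H w \<bullet> (y' - w)\<close> is at
  most the decrease of \<open>|x k - w|\<^sup>2\<close> divided by \<open>2\<gamma>\<eta> k\<close>; as \<open>\<eta>\<close> is nonincreasing these
  quotients telescope to at most \<open>2 D\<^sub>X\<^sup>2 / \<eta> (K-1)\<close>. For \<open>w \<in> X\<close> the \<open>H\<close>-term is at least
  \<open>-\<surd>2 C\<^sub>H D\<^sub>X\<close>, and plain telescoping bounds \<open>F w \<bullet> (y' - w)\<close>. Averaging and taking suprema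
  over \<open>w\<close> gives the gap estimates. Under the rate conditions both bounds tend to 0, so a
  limit point satisfies the Minty inequalities, first of \<open>VI(X,F)\<close> and then of
  \<open>VI(SOL X F, H)\<close>; for continuous monotone operators on convex sets these characterise
  the solutions.\<close>

lemma extragradient_step_inequality:
  fixes X :: "'a::euclidean_space set"
  assumes X: "closed X" "convex X" and G_lip: "L-lipschitz_on X G"
    and xX: "x \<in> X" and wX: "w \<in> X" and \<gamma>: "\<gamma> > 0" "\<gamma> * L \<le> 1"
    and y: "y = closest_point X (x - \<gamma> *\<^sub>R G x)"
    and x': "x' = closest_point X (x - \<gamma> *\<^sub>R G y)"
  shows "2 * \<gamma> * (G y \<bullet> (y - w)) \<le> (norm (x - w))\<^sup>2 - (norm (x' - w))\<^sup>2"
proof -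
  have yX: "y \<in> X" and x'X: "x' \<in> X"
    using y x' closest_point_in_set[OF X(1)] xX by auto
  have proj_x': "(x - \<gamma> *\<^sub>R G y - x') \<bullet> (w - x') \<le> 0"
    using closest_point_dot[OF X(2,1) wX] x' by simp
  have proj_y: "(x - \<gamma> *\<^sub>R G x - y) \<bullet> (x' - y) \<le> 0"
    using closest_point_dot[OF X(2,1) x'X] y by simp
  \<comment> \<open>add the two projection inequalities; the cross term is absorbed by Young's inequality\<close>
  define a where "a = norm (y - x)"
  define b where "b = norm (y - x')"
  have "(G y - G x) \<bullet> (y - x') \<le> norm (G y - G x) * b"
    unfolding b_def by (rule norm_cauchy_schwarz)
  also have "\<dots> \<le> L * a * b"
    unfolding a_def b_def by (rule mult_right_mono[OF lipschitz_on_normD[OF G_lip yX xX]]) simp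
  finally have "2 * \<gamma> * ((G y - G x) \<bullet> (y - x')) \<le> (\<gamma> * L) * (2 * a * b)"
    using \<gamma>(1) by (simp add: mult_left_mono mult_ac)
  also have "\<dots> \<le> 2 * a * b"
    using \<gamma> lipschitz_on_nonneg[OF G_lip] by (intro mult_left_le_one_le) (auto simp: a_def b_def)
  also have "\<dots> \<le> a\<^sup>2 + b\<^sup>2" by (rule sum_squares_bound)
  finally have "2 * \<gamma> * ((G y - G x) \<bullet> (y - x')) \<le> (y - x) \<bullet> (y - x) + (y - x') \<bullet> (y - x')"
    by (simp add: a_def b_def power2_norm_eq_inner)
  then show ?thesis
    using proj_x' proj_y unfolding power2_norm_eq_inner
    by (simp add: inner_diff_left inner_diff_right inner_commute algebra_simps)
qed

lemma monotone_op_inner_le: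
  assumes "monotone_op X F" "x \<in> X" "w \<in> X"
  shows "F w \<bullet> (x - w) \<le> F x \<bullet> (x - w)"
  using assms by (auto simp: monotone_op_def inner_diff_left)

lemma SOL_subset: "SOL X F \<subseteq> X"
  by (auto simp: SOL_def)

lemma SOL_imp_Minty:
  assumes "monotone_op X F" "x \<in> SOL X F" "w \<in> X"
  shows "0 \<le> F w \<bullet> (w - x)"
proof -
  have "0 \<le> F x \<bullet> (w - x)" using assms(2,3) by (auto simp: SOL_def)
  also have "\<dots> \<le> F w \<bullet> (w - x)"
    using monotone_op_inner_le[OF assms(1,3)] assms(2) SOL_subset by blast
  finally show ?thesis .
qed

text \<open>Minty's lemma: test the Minty inequality at the points of the segment from \<open>p\<close> to
  \<open>y\<close> approaching \<open>p\<close>, and pass to the limit by continuity of \<open>G\<close>.\<close>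
lemma Minty_imp_SOL:
  fixes C :: "'a::euclidean_space set"
  assumes C: "convex C" and G: "continuous_on C G" and pC: "p \<in> C"
    and Minty: "\<And>w. w \<in> C \<Longrightarrow> 0 \<le> G w \<bullet> (w - p)"
  shows "p \<in> SOL C G"
proof -
  have "0 \<le> G p \<bullet> (y - p)" if yC: "y \<in> C" for y
  proof -
    define z where "z n = p + (1 / real (Suc n)) *\<^sub>R (y - p)" for n
    have zC: "z n \<in> C" for n
    proof -
      have "(1 - 1 / real (Suc n)) *\<^sub>R p + (1 / real (Suc n)) *\<^sub>R y \<in> C"
        by (rule convexD[OF C pC yC]) auto
      then show ?thesis by (simp add: z_def algebra_simps)
    qed
    have "(\<lambda>n. p + (1 / real (Suc n)) *\<^sub>R (y - p)) \<longlonglongrightarrow> p + 0 *\<^sub>R (y - p)"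
      by (intro tendsto_intros LIMSEQ_Suc[OF lim_const_over_n])
    then have "z \<longlonglongrightarrow> p" by (simp add: z_def[abs_def])
    then have "(\<lambda>n. G (z n)) \<longlonglongrightarrow> G p"
      using G zC pC unfolding continuous_on_sequentially comp_def by blast
    then have lim: "(\<lambda>n. G (z n) \<bullet> (y - p)) \<longlonglongrightarrow> G p \<bullet> (y - p)"
      by (intro tendsto_intros)
    have "0 \<le> G (z n) \<bullet> (y - p)" for n
    proof -
      have "0 \<le> G (z n) \<bullet> (z n - p)" using Minty zC by blast
      also have "\<dots> = (1 / real (Suc n)) * (G (z n) \<bullet> (y - p))" by (simp add: z_def)
      finally show ?thesis by (simp add: zero_le_divide_iff add_pos_nonneg)
    qed
    then show ?thesis using LIMSEQ_le_const[OF lim] by blast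
  qed
  then show ?thesis using pC by (simp add: SOL_def)
qed

lemma SOL_eq_Inter_halfspaces:
  fixes X :: "'a::euclidean_space set"
  assumes "convex X" "continuous_on X F" "monotone_op X F"
  shows "SOL X F = X \<inter> (\<Inter>w\<in>X. {x. F w \<bullet> x \<le> F w \<bullet> w})"
proof
  show "SOL X F \<subseteq> X \<inter> (\<Inter>w\<in>X. {x. F w \<bullet> x \<le> F w \<bullet> w})"
    using SOL_imp_Minty[OF assms(3)] SOL_subset by (fastforce simp: inner_diff_right)
  show "X \<inter> (\<Inter>w\<in>X. {x. F w \<bullet> x \<le> F w \<bullet> w}) \<subseteq> SOL X F"
    using Minty_imp_SOL[OF assms(1,2)] by (auto simp: inner_diff_right)
qed

lemma closed_SOL:
  fixes X :: "'a::euclidean_space set"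
  assumes "closed X" "convex X" "continuous_on X F" "monotone_op X F"
  shows "closed (SOL X F)"
  unfolding SOL_eq_Inter_halfspaces[OF assms(2-4)]
  by (intro closed_Int assms(1) closed_INT closed_halfspace_le ballI)

lemma convex_SOL:
  fixes X :: "'a::euclidean_space set"
  assumes "convex X" "continuous_on X F" "monotone_op X F"
  shows "convex (SOL X F)"
  unfolding SOL_eq_Inter_halfspaces[OF assms]
  by (intro convex_Int assms(1) convex_INT convex_halfspace_le ballI)

lemma limit_in_SOL:
  fixes C :: "'a::euclidean_space set"
  assumes C: "convex C" and G: "continuous_on C G" and pC: "p \<in> C"
    and z: "z \<longlonglongrightarrow> p" and b: "b \<longlonglongrightarrow> 0"
    and bound: "\<And>w. w \<in> C \<Longrightarrow> eventually (\<lambda>n. G w \<bullet> (z n - w) \<le> b n) sequentially"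
  shows "p \<in> SOL C G"
proof (rule Minty_imp_SOL[OF C G pC])
  fix w assume "w \<in> C"
  have "(\<lambda>n. G w \<bullet> (z n - w)) \<longlonglongrightarrow> G w \<bullet> (p - w)"
    by (intro tendsto_intros z)
  then have "G w \<bullet> (p - w) \<le> 0"
    using tendsto_le[OF trivial_limit_sequentially b] bound[OF \<open>w \<in> C\<close>] by blast
  then show "0 \<le> G w \<bullet> (w - p)" by (simp add: inner_diff_right)
qed

lemma sum_telescope_div_decseq_le:
  fixes d \<eta> :: "nat \<Rightarrow> real"
  assumes d: "\<And>k. d k \<le> M" and \<eta>: "\<And>k. \<eta> k > 0" "decseq \<eta>"
  shows "(\<Sum>k<Suc n. (d k - d (Suc k)) / \<eta> k) \<le> (M - d (Suc n)) / \<eta> n"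
proof (induction n)
  case 0
  show ?case using d[of 0] \<eta>(1)[of 0] by (simp add: divide_right_mono)
next
  case (Suc n)
  have "(M - d (Suc n)) / \<eta> n \<le> (M - d (Suc n)) / \<eta> (Suc n)"
    using d[of "Suc n"] \<eta> by (intro divide_left_mono) (auto simp: decseq_Suc_iff)
  then show ?case using Suc by (simp add: diff_divide_distrib)
qed

lemma inner_average_diff:
  fixes z :: "nat \<Rightarrow> 'a::real_inner"
  assumes "K > 0"
  shows "v \<bullet> ((1 / real K) *\<^sub>R (\<Sum>k<K. z k) - w) = (1 / real K) * (\<Sum>k<K. v \<bullet> (z k - w))"
  using assms by (simp add: inner_diff_right inner_sum_right sum_subtractf field_simps)

lemma norm_diff_le_DX2:
  assumes "bounded X" "a \<in> X" "b \<in> X"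
  shows "(norm (a - b))\<^sup>2 \<le> 2 * DX2 X"
proof -
  have "bdd_above ((\<lambda>p. (1/2) * (norm (fst p - snd p))\<^sup>2) ` (X \<times> X))"
  proof (rule bdd_aboveI2)
    fix p assume "p \<in> X \<times> X"
    then have "norm (fst p - snd p) \<le> diameter X"
      using diameter_bounded_bound[OF assms(1)] by (auto simp: dist_norm)
    then show "(1/2) * (norm (fst p - snd p))\<^sup>2 \<le> (1/2) * (diameter X)\<^sup>2"
      by (simp add: power_mono)
  qed
  then have "(1/2) * (norm (fst (a, b) - snd (a, b)))\<^sup>2 \<le> DX2 X"
    unfolding DX2_def by (rule cSUP_upper[rotated]) (use assms in auto)
  then show ?thesis by simp
qed

lemma norm_diff_le_DX:
  assumes "bounded X" "a \<in> X" "b \<in> X"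
  shows "norm (a - b) \<le> sqrt 2 * DX X"
proof -
  have "norm (a - b) = sqrt ((norm (a - b))\<^sup>2)" by simp
  also have "\<dots> \<le> sqrt (2 * DX2 X)" by (rule real_sqrt_le_mono[OF norm_diff_le_DX2[OF assms]])
  finally show ?thesis by (simp add: DX_def real_sqrt_mult)
qed

lemma norm_le_SUP_norm:
  assumes "bounded (f ` S)" "a \<in> S"
  shows "norm (f a) \<le> (SUP x\<in>S. norm (f x))"
proof (rule cSUP_upper[OF assms(2)])
  show "bdd_above ((\<lambda>x. norm (f x)) ` S)"
    using assms(1) bdd_above_norm[of "f ` S"] by (simp add: image_image)
qed

lemma Gap_le:
  assumes "Y \<noteq> {}" "\<And>w. w \<in> Y \<Longrightarrow> G w \<bullet> (x - w) \<le> c"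
  shows "Gap x Y G \<le> c"
  unfolding Gap_def using assms by (rule cSUP_least)

lemma Gap_ge:
  assumes "\<And>w. w \<in> Y \<Longrightarrow> G w \<bullet> (x - w) \<le> c" "w \<in> Y"
  shows "G w \<bullet> (x - w) \<le> Gap x Y G"
  unfolding Gap_def using assms by (intro cSUP_upper bdd_aboveI2) auto

lemma Gap_nonneg:
  assumes "\<And>w. w \<in> Y \<Longrightarrow> G w \<bullet> (x - w) \<le> c" "x \<in> Y"
  shows "0 \<le> Gap x Y G"
  using Gap_ge[OF assms] by simp

lemma Gap_ge_neg_BH_pdist:
  fixes X :: "'a::euclidean_space set"
  assumes S: "closed (SOL X F)" "SOL X F \<noteq> {}" and H: "bounded (H ` SOL X F)"
    and bound: "\<And>w. w \<in> SOL X F \<Longrightarrow> H w \<bullet> (x - w) \<le> c"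
  shows "- BH X F H * pdist x (SOL X F) \<le> Gap x (SOL X F) H"
proof -
  define q where "q = closest_point (SOL X F) x"
  have q: "q \<in> SOL X F" unfolding q_def by (rule closest_point_in_set[OF S])
  have "- BH X F H * pdist x (SOL X F) \<le> - (norm (H q) * norm (x - q))"
    using norm_le_SUP_norm[OF H q] unfolding pdist_def BH_def q_def[symmetric]
    by (simp add: mult_right_mono)
  also have "\<dots> \<le> H q \<bullet> (x - q)"
    using norm_cauchy_schwarz[of "- H q" "x - q"] by simp
  also have "\<dots> \<le> Gap x (SOL X F) H" by (rule Gap_ge[OF bound q])
  finally show ?thesis .
qed

lemma stepsize_sum_le_one:
  fixes \<gamma> a b :: real
  assumes "\<gamma>\<^sup>2 * (a\<^sup>2 + b\<^sup>2) \<le> 1/2"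
  shows "\<gamma> * (a + b) \<le> 1"
proof -
  have "(\<gamma> * (a + b))\<^sup>2 \<le> \<gamma>\<^sup>2 * (2 * (a\<^sup>2 + b\<^sup>2))"
    using sum_squares_bound[of a b]
    by (simp add: power_mult_distrib power2_sum mult_left_mono)
  also have "\<dots> \<le> 1\<^sup>2" using assms by (simp add: algebra_simps)
  finally show ?thesis by (rule power2_le_imp_le) simp
qed

locale bilevel_extragradient =
  fixes X :: "'a::euclidean_space set"
    and F H :: "'a \<Rightarrow> 'a"
    and LF LH \<gamma> :: real
    and \<eta> :: "nat \<Rightarrow> real"
    and x y ybar :: "nat \<Rightarrow> 'a"
  assumes X_ne: "X \<noteq> {}" and X_closed: "closed X" and X_convex: "convex X"
    and X_bounded: "bounded X"
    and F_lip: "lipschitz_on LF X F" and F_mono: "monotone_op X F"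
    and H_lip: "lipschitz_on LH X H" and H_mono: "monotone_op X H"
    and bilevel_ne: "SOL (SOL X F) H \<noteq> {}"
    and \<gamma>_pos: "\<gamma> > 0"
    and \<eta>_pos: "\<And>k. \<eta> k > 0" and \<eta>_dec: "decseq \<eta>"
    and step: "\<gamma>\<^sup>2 * (LF\<^sup>2 + (\<eta> 0)\<^sup>2 * LH\<^sup>2) \<le> 1/2"
    and x0: "x 0 \<in> X"
    and y_step: "\<And>k. y (Suc k) = proj X (x k - \<gamma> *\<^sub>R (F (x k) + \<eta> k *\<^sub>R H (x k)))"
    and x_step: "\<And>k. x (Suc k) = proj X (x k - \<gamma> *\<^sub>R (F (y (Suc k)) + \<eta> k *\<^sub>R H (y (Suc k))))"
    and ybar_def: "\<And>K. ybar K = (1 / real K) *\<^sub>R (\<Sum>k<K. y (Suc k))"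
begin

lemma continuous_F: "continuous_on X F"
  using F_lip by (rule lipschitz_on_continuous_on)

lemma continuous_H: "continuous_on X H"
  using H_lip by (rule lipschitz_on_continuous_on)

lemma bounded_H_image: "bounded (H ` X)"
  using X_closed X_bounded continuous_H
  by (intro compact_imp_bounded compact_continuous_image) (auto simp: compact_eq_bounded_closed)

lemma closed_SOL_F: "closed (SOL X F)"
  by (rule closed_SOL[OF X_closed X_convex continuous_F F_mono])

lemma SOL_F_ne: "SOL X F \<noteq> {}"
  using bilevel_ne SOL_subset by blast

lemma x_in_X: "x k \<in> X"
  by (cases k) (simp_all add: x0 x_step closest_point_in_set[OF X_closed X_ne])

lemma y_in_X: "y (Suc k) \<in> X"
  by (simp add: y_step closest_point_in_set[OF X_closed X_ne])

lemma ybar_in_X: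
  assumes "K \<ge> 1"
  shows "ybar K \<in> X"
proof -
  have "ybar K = (\<Sum>k<K. (1 / real K) *\<^sub>R y (Suc k))"
    by (simp add: ybar_def scaleR_sum_right)
  also have "\<dots> \<in> X"
    by (rule convex_sum[OF _ X_convex]) (use assms y_in_X in auto)
  finally show ?thesis .
qed

lemma stepsize_le_one: "\<gamma> * (LF + \<eta> k * LH) \<le> 1"
proof (rule stepsize_sum_le_one)
  have "(\<eta> k)\<^sup>2 \<le> (\<eta> 0)\<^sup>2"
    using \<eta>_pos[of k] decseqD[OF \<eta>_dec, of 0 k] by (intro power_mono) auto
  then have "\<gamma>\<^sup>2 * (LF\<^sup>2 + (\<eta> k * LH)\<^sup>2) \<le> \<gamma>\<^sup>2 * (LF\<^sup>2 + (\<eta> 0)\<^sup>2 * LH\<^sup>2)"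
    by (intro mult_left_mono) (auto simp: power_mult_distrib mult_right_mono)
  then show "\<gamma>\<^sup>2 * (LF\<^sup>2 + (\<eta> k * LH)\<^sup>2) \<le> 1/2" using step by linarith
qed

lemma extragradient_descent:
  assumes "w \<in> X"
  shows "2 * \<gamma> * (F (y (Suc k)) \<bullet> (y (Suc k) - w))
           + 2 * \<gamma> * \<eta> k * (H (y (Suc k)) \<bullet> (y (Suc k) - w))
         \<le> (norm (x k - w))\<^sup>2 - (norm (x (Suc k) - w))\<^sup>2"
proof -
  have "(LF + \<eta> k * LH)-lipschitz_on X (\<lambda>z. F z + \<eta> k *\<^sub>R H z)"
    using \<eta>_pos[of k] by (intro lipschitz_on_add F_lip lipschitz_on_cmult_nonneg H_lip) simp
  from extragradient_step_inequality[OF X_closed X_convex this x_in_X assms \<gamma>_pos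
      stepsize_le_one y_step x_step]
  show ?thesis by (simp add: inner_add_left algebra_simps)
qed

lemma H_term_bound:
  assumes w: "w \<in> SOL X F" and K: "K \<ge> 1"
  shows "H w \<bullet> (ybar K - w) \<le> DX2 X / (\<gamma> * \<eta> (K - 1) * real K)"
proof -
  obtain n where n: "K = Suc n" using K by (cases K) auto
  have wX: "w \<in> X" using w SOL_subset by blast
  define d where "d k = (norm (x k - w))\<^sup>2" for k
  have summand_le: "H w \<bullet> (y (Suc k) - w) \<le> (d k - d (Suc k)) / \<eta> k / (2 * \<gamma>)" for k
  proof -
    have "0 \<le> 2 * \<gamma> * (F (y (Suc k)) \<bullet> (y (Suc k) - w))"
      using SOL_imp_Minty[OF F_mono w y_in_X] \<gamma>_pos by simp
    moreover have "2 * \<gamma> * \<eta> k * (H w \<bullet> (y (Suc k) - w))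
                     \<le> 2 * \<gamma> * \<eta> k * (H (y (Suc k)) \<bullet> (y (Suc k) - w))"
      using monotone_op_inner_le[OF H_mono y_in_X wX] \<gamma>_pos \<eta>_pos[of k]
      by (intro mult_left_mono) auto
    ultimately have "(H w \<bullet> (y (Suc k) - w)) * \<eta> k * (2 * \<gamma>) \<le> d k - d (Suc k)"
      using extragradient_descent[OF wX, of k] unfolding d_def by (simp add: mult_ac)
    then show ?thesis
      using \<gamma>_pos \<eta>_pos[of k] by (simp add: pos_le_divide_eq)
  qed
  have d_le: "d k \<le> 2 * DX2 X" for k
    unfolding d_def by (rule norm_diff_le_DX2[OF X_bounded x_in_X wX])
  have "(\<Sum>k<K. H w \<bullet> (y (Suc k) - w)) \<le> (\<Sum>k<Suc n. (d k - d (Suc k)) / \<eta> k) / (2 * \<gamma>)"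
    unfolding n sum_divide_distrib by (rule sum_mono[OF summand_le])
  also have "\<dots> \<le> (2 * DX2 X - d (Suc n)) / \<eta> n / (2 * \<gamma>)"
    using \<gamma>_pos \<eta>_pos \<eta>_dec
    by (intro divide_right_mono sum_telescope_div_decseq_le d_le) auto
  also have "\<dots> \<le> 2 * DX2 X / \<eta> n / (2 * \<gamma>)"
    using \<gamma>_pos \<eta>_pos[of n] by (intro divide_right_mono) (auto simp: d_def)
  finally have sum_le: "(\<Sum>k<K. H w \<bullet> (y (Suc k) - w)) \<le> DX2 X / (\<gamma> * \<eta> n)"
    by (simp add: mult.commute)
  have "H w \<bullet> (ybar K - w) = (1 / real K) * (\<Sum>k<K. H w \<bullet> (y (Suc k) - w))"
    unfolding ybar_def using K by (intro inner_average_diff) simp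
  also have "\<dots> \<le> (1 / real K) * (DX2 X / (\<gamma> * \<eta> n))"
    by (rule mult_left_mono[OF sum_le]) simp
  also have "\<dots> = DX2 X / (\<gamma> * \<eta> (K - 1) * real K)" by (simp add: n field_simps)
  finally show ?thesis .
qed

lemma H_inner_le_CH_DX:
  assumes "w \<in> X"
  shows "- (H (y (Suc k)) \<bullet> (y (Suc k) - w)) \<le> sqrt 2 * CH X H * DX X"
proof -
  have CH: "norm (H (y (Suc k))) \<le> CH X H"
    unfolding CH_def by (rule norm_le_SUP_norm[OF bounded_H_image y_in_X])
  have "- (H (y (Suc k)) \<bullet> (y (Suc k) - w)) \<le> norm (H (y (Suc k))) * norm (y (Suc k) - w)"
    using norm_cauchy_schwarz[of "- H (y (Suc k))" "y (Suc k) - w"] by simp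
  also have "\<dots> \<le> CH X H * (sqrt 2 * DX X)"
    using CH order_trans[OF norm_ge_zero CH] norm_diff_le_DX[OF X_bounded y_in_X assms]
    by (intro mult_mono) auto
  finally show ?thesis by (simp add: mult_ac)
qed

lemma F_term_bound:
  assumes wX: "w \<in> X" and K: "K \<ge> 1"
  shows "F w \<bullet> (ybar K - w)
           \<le> DX2 X / (\<gamma> * real K) + sqrt 2 * CH X H * DX X * (1 / real K) * (\<Sum>k<K. \<eta> k)"
proof -
  define S where "S = sqrt 2 * CH X H * DX X"
  define d where "d k = (norm (x k - w))\<^sup>2" for k
  have summand_le: "2 * \<gamma> * (F w \<bullet> (y (Suc k) - w)) \<le> d k - d (Suc k) + 2 * \<gamma> * \<eta> k * S" for k
  proof -
    have c: "0 \<le> 2 * \<gamma> * \<eta> k" using \<gamma>_pos \<eta>_pos[of k] by simp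
    have "2 * \<gamma> * \<eta> k * - (H (y (Suc k)) \<bullet> (y (Suc k) - w)) \<le> 2 * \<gamma> * \<eta> k * S"
      using H_inner_le_CH_DX[OF wX, of k] c unfolding S_def by (rule mult_left_mono)
    moreover have "2 * \<gamma> * (F w \<bullet> (y (Suc k) - w)) \<le> 2 * \<gamma> * (F (y (Suc k)) \<bullet> (y (Suc k) - w))"
      using monotone_op_inner_le[OF F_mono y_in_X wX] \<gamma>_pos by (intro mult_left_mono) auto
    ultimately show ?thesis using extragradient_descent[OF wX, of k] unfolding d_def by linarith
  qed
  have "2 * \<gamma> * (\<Sum>k<K. F w \<bullet> (y (Suc k) - w)) \<le> (\<Sum>k<K. d k - d (Suc k) + 2 * \<gamma> * \<eta> k * S)"
    unfolding sum_distrib_left by (rule sum_mono[OF summand_le])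
  also have "\<dots> = (\<Sum>k<K. d k - d (Suc k)) + 2 * \<gamma> * S * (\<Sum>k<K. \<eta> k)"
    by (simp add: sum.distrib sum_distrib_left mult_ac)
  also have "\<dots> = d 0 - d K + 2 * \<gamma> * S * (\<Sum>k<K. \<eta> k)"
    by (simp only: sum_lessThan_telescope')
  also have "\<dots> \<le> 2 * DX2 X + 2 * \<gamma> * S * (\<Sum>k<K. \<eta> k)"
    using norm_diff_le_DX2[OF X_bounded x_in_X wX, of 0] zero_le_power2[of "norm (x K - w)"]
    unfolding d_def by linarith
  finally have "(\<Sum>k<K. F w \<bullet> (y (Suc k) - w)) \<le> DX2 X / \<gamma> + S * (\<Sum>k<K. \<eta> k)"
    using \<gamma>_pos by (simp add: field_simps)
  then have "(1 / real K) * (\<Sum>k<K. F w \<bullet> (y (Suc k) - w))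
               \<le> (1 / real K) * (DX2 X / \<gamma> + S * (\<Sum>k<K. \<eta> k))"
    by (rule mult_left_mono) simp
  moreover have "F w \<bullet> (ybar K - w) = (1 / real K) * (\<Sum>k<K. F w \<bullet> (y (Suc k) - w))"
    unfolding ybar_def using K by (intro inner_average_diff) simp
  ultimately show ?thesis using \<gamma>_pos K by (simp add: S_def field_simps)
qed

lemma H_gap_bounds:
  assumes "K \<ge> 1"
  shows "- BH X F H * pdist (ybar K) (SOL X F) \<le> Gap (ybar K) (SOL X F) H"
    and "Gap (ybar K) (SOL X F) H \<le> DX2 X / (\<gamma> * \<eta> (K - 1) * real K)"
proof -
  have "bounded (H ` SOL X F)"
    using bounded_H_image SOL_subset by (rule bounded_subset[OF _ image_mono])
  then show "- BH X F H * pdist (ybar K) (SOL X F) \<le> Gap (ybar K) (SOL X F) H"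
    using Gap_ge_neg_BH_pdist[OF closed_SOL_F SOL_F_ne] H_term_bound assms by blast
  show "Gap (ybar K) (SOL X F) H \<le> DX2 X / (\<gamma> * \<eta> (K - 1) * real K)"
    using Gap_le[OF SOL_F_ne] H_term_bound assms by blast
qed

lemma F_gap_bounds:
  assumes "K \<ge> 1"
  shows "0 \<le> Gap (ybar K) X F"
    and "Gap (ybar K) X F
           \<le> DX2 X / (\<gamma> * real K) + sqrt 2 * CH X H * DX X * (1 / real K) * (\<Sum>k<K. \<eta> k)"
proof -
  have "\<And>w. w \<in> X \<Longrightarrow> F w \<bullet> (ybar K - w)
           \<le> DX2 X / (\<gamma> * real K) + sqrt 2 * CH X H * DX X * (1 / real K) * (\<Sum>k<K. \<eta> k)"
    using F_term_bound assms by blast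
  then show "0 \<le> Gap (ybar K) X F"
    and "Gap (ybar K) X F
           \<le> DX2 X / (\<gamma> * real K) + sqrt 2 * CH X H * DX X * (1 / real K) * (\<Sum>k<K. \<eta> k)"
    using Gap_nonneg[OF _ ybar_in_X[OF assms]] Gap_le[OF X_ne] by blast+
qed

lemma accumulation_point_in_bilevel_SOL:
  assumes lim_H: "filterlim (\<lambda>k. real k * \<eta> (k - 1)) at_top sequentially"
    and lim_F: "(\<lambda>k. (1 / real k) * (\<Sum>j<k. \<eta> j)) \<longlonglongrightarrow> 0"
    and r: "strict_mono r" and conv: "(ybar \<circ> r) \<longlonglongrightarrow> p"
  shows "p \<in> SOL (SOL X F) H"
proof -
  have ev: "eventually (\<lambda>n. 1 \<le> r n) sequentially"
    using seq_suble[OF r] by (intro eventually_sequentiallyI[of 1]) (metis order_trans)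
  have z: "(\<lambda>n. ybar (r n)) \<longlonglongrightarrow> p" using conv by (simp add: comp_def)
  have pX: "p \<in> X"
    using ev ybar_in_X by (intro Lim_in_closed_set[OF X_closed _ trivial_limit_sequentially z])
      (auto elim: eventually_mono)
  define bF where
    "bF K = DX2 X / (\<gamma> * real K) + sqrt 2 * CH X H * DX X * (1 / real K) * (\<Sum>k<K. \<eta> k)" for K
  define bH where "bH K = DX2 X / (\<gamma> * \<eta> (K - 1) * real K)" for K
  have "(\<lambda>K. DX2 X / \<gamma> / real K + sqrt 2 * CH X H * DX X * ((1 / real K) * (\<Sum>k<K. \<eta> k)))
          \<longlonglongrightarrow> 0 + sqrt 2 * CH X H * DX X * 0"
    by (intro tendsto_intros lim_const_over_n lim_F)
  then have bF: "bF \<longlonglongrightarrow> 0"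
    by (simp add: bF_def[abs_def] mult.assoc)
  have "(\<lambda>K. DX2 X / \<gamma> * inverse (real K * \<eta> (K - 1))) \<longlonglongrightarrow> DX2 X / \<gamma> * 0"
    by (intro tendsto_intros tendsto_inverse_0_at_top lim_H)
  then have bH: "bH \<longlonglongrightarrow> 0"
    by (simp add: bH_def[abs_def] divide_inverse inverse_mult_distrib mult_ac)
  have pS: "p \<in> SOL X F"
  proof (rule limit_in_SOL[OF X_convex continuous_F pX z])
    show "(\<lambda>n. bF (r n)) \<longlonglongrightarrow> 0"
      using LIMSEQ_subseq_LIMSEQ[OF bF r] by (simp add: comp_def)
    show "eventually (\<lambda>n. F w \<bullet> (ybar (r n) - w) \<le> bF (r n)) sequentially" if "w \<in> X" for w
      using ev by (rule eventually_mono) (unfold bF_def, rule F_term_bound[OF that])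
  qed
  show ?thesis
  proof (rule limit_in_SOL[OF convex_SOL[OF X_convex continuous_F F_mono]
        continuous_on_subset[OF continuous_H SOL_subset] pS z])
    show "(\<lambda>n. bH (r n)) \<longlonglongrightarrow> 0"
      using LIMSEQ_subseq_LIMSEQ[OF bH r] by (simp add: comp_def)
    show "eventually (\<lambda>n. H w \<bullet> (ybar (r n) - w) \<le> bH (r n)) sequentially"
      if "w \<in> SOL X F" for w
      using ev by (rule eventually_mono) (unfold bH_def, rule H_term_bound[OF that])
  qed
qed

end

theorem theorem3p4:
  fixes X :: "'a::euclidean_space set"
    and F H :: "'a \<Rightarrow> 'a"
    and LF LH \<gamma> :: real
    and \<eta> :: "nat \<Rightarrow> real"
    and x y ybar :: "nat \<Rightarrow> 'a"
  assumes X_ne: "X \<noteq> {}" and X_closed: "closed X" and X_convex: "convex X"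
    and X_bounded: "bounded X"
    and F_lip: "lipschitz_on LF X F" and F_mono: "monotone_op X F"
    and H_lip: "lipschitz_on LH X H" and H_mono: "monotone_op X H"
    and bilevel_ne: "SOL (SOL X F) H \<noteq> {}"
    and \<gamma>_pos: "\<gamma> > 0"
    and \<eta>_pos: "\<And>k. \<eta> k > 0" and \<eta>_dec: "decseq \<eta>"
    and step: "\<gamma>\<^sup>2 * (LF\<^sup>2 + (\<eta> 0)\<^sup>2 * LH\<^sup>2) \<le> 1/2"
    and x0: "x 0 \<in> X"
    and y_step: "\<And>k. y (Suc k) = proj X (x k - \<gamma> *\<^sub>R (F (x k) + \<eta> k *\<^sub>R H (x k)))"
    and x_step: "\<And>k. x (Suc k) = proj X (x k - \<gamma> *\<^sub>R (F (y (Suc k)) + \<eta> k *\<^sub>R H (y (Suc k))))"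
    and ybar_def: "\<And>K. ybar K = (1 / real K) *\<^sub>R (\<Sum>k<K. y (Suc k))"
  shows
    "(\<forall>K\<ge>1. - BH X F H * pdist (ybar K) (SOL X F) \<le> Gap (ybar K) (SOL X F) H
              \<and> Gap (ybar K) (SOL X F) H \<le> DX2 X / (\<gamma> * \<eta> (K - 1) * real K))
     \<and> (\<forall>K\<ge>1. 0 \<le> Gap (ybar K) X F
              \<and> Gap (ybar K) X F \<le> DX2 X / (\<gamma> * real K)
                   + sqrt 2 * CH X H * DX X * (1 / real K) * (\<Sum>k<K. \<eta> k))
     \<and> ((filterlim (\<lambda>k. real k * \<eta> (k - 1)) at_top sequentially
          \<and> (\<lambda>k. (1 / real k) * (\<Sum>j<k. \<eta> j)) \<longlonglongrightarrow> 0)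
        \<longrightarrow> (\<forall>p r. strict_mono r \<and> (ybar \<circ> r) \<longlonglongrightarrow> p \<longrightarrow> p \<in> SOL (SOL X F) H))"
proof -
  interpret bilevel_extragradient X F H LF LH \<gamma> \<eta> x y ybar
    by unfold_locales (fact assms)+
  show ?thesis
    using H_gap_bounds F_gap_bounds accumulation_point_in_bilevel_SOL by blast
qed

end
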